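(* Let $b_1,r_1,b_2,r_2$ be positive integers with $b_1r_2-b_2r_1=1$, and let $n>0$ be an integer which is not of the form $xr_1+yr_2$ for any integers $x,y>0$. Then there is no rational number of the form $\frac{b}{n}$ with $b$ an integer lying in the open interval $(\frac{b_2}{r_2},\frac{b_1}{r_1})$, and $$\Delta^n(b_1+b_2,r_1+r_2)=\Delta^n(b_1,r_1)+\Delta^n(b_2,r_2).$$
   Context: For positive integers $b,r$ and an integer $j\ge 1$, let $\overline{jb}$ denote the residue of $jb$ modulo $r$ in $\{0,\dots,r-1\}$, and define $$\overline{M}^j(b,r)=\frac{\overline{jb}\,(r-\overline{jb})}{2r},\qquad M^j(b,r)=\frac{jb\,(r-jb)}{2r},\qquad \Delta^j(b,r)=\overline{M}^j(b,r)-M^j(b,r).$$ *)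

theory Defs
  imports Complex_Main
begin

definition resid :: "int \<Rightarrow> int \<Rightarrow> int \<Rightarrow> int" where
  "resid j b r = (j * b) mod r"

definition Mbar :: "int \<Rightarrow> int \<Rightarrow> int \<Rightarrow> real" where
  "Mbar j b r = real_of_int (resid j b r * (r - resid j b r)) / (2 * real_of_int r)"

definition M :: "int \<Rightarrow> int \<Rightarrow> int \<Rightarrow> real" where
  "M j b r = real_of_int (j * b * (r - j * b)) / (2 * real_of_int r)"

definition Delta :: "int \<Rightarrow> int \<Rightarrow> int \<Rightarrow> real" where
  "Delta j b r = Mbar j b r - M j b r"

end

theory Submission
  imports Defs
begin

text \<open>
  An integer \<open>b\<close> with \<open>b\<^sub>2/r\<^sub>2 < b/n < b\<^sub>1/r\<^sub>1\<close> would give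
  \<open>x = b r\<^sub>2 - b\<^sub>2 n > 0\<close> and \<open>y = b\<^sub>1 n - b r\<^sub>1 > 0\<close> with
  \<open>x r\<^sub>1 + y r\<^sub>2 = n (b\<^sub>1 r\<^sub>2 - b\<^sub>2 r\<^sub>1) = n\<close>. So no integer lies strictly between
  \<open>n b\<^sub>2/r\<^sub>2\<close> and \<open>n b\<^sub>1/r\<^sub>1\<close>, and both of them, as well as their mediant
  \<open>n (b\<^sub>1+b\<^sub>2)/(r\<^sub>1+r\<^sub>2)\<close>, lie in a common interval \<open>[q, q+1]\<close>. When
  \<open>q \<le> j b/r \<le> q+1\<close> one has \<open>\<Delta>\<^sup>j(b,r) = q (2 j b - (q+1) r)/2\<close>, which is
  additive in \<open>(b, r)\<close>.
\<close>

lemma Delta_eq_between: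
  fixes j b r q :: int
  assumes "r > 0" and "q * r \<le> j * b" and "j * b \<le> (q + 1) * r"
  shows "Delta j b r = real_of_int (q * (2 * (j * b) - (q + 1) * r)) / 2"
proof (cases "j * b = (q + 1) * r")
  case True
  then have "resid j b r = 0" by (simp add: resid_def)
  with \<open>r > 0\<close> show ?thesis
    unfolding Delta_def Mbar_def M_def True by (simp add: field_simps)
next
  case False
  define s where "s = j * b - q * r"
  have jb: "j * b = s + q * r" by (simp add: s_def)
  have "0 \<le> s" "s < r" using assms False by (auto simp: s_def algebra_simps)
  then have "resid j b r = s" by (simp add: resid_def jb)
  with \<open>r > 0\<close> show ?thesis
    unfolding Delta_def Mbar_def M_def jb by (simp add: field_simps)
qed

lemma Delta_add_common_quotient:
  fixes j b1 r1 b2 r2 q :: int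
  assumes "r1 > 0" "q * r1 \<le> j * b1" "j * b1 \<le> (q + 1) * r1"
    and "r2 > 0" "q * r2 \<le> j * b2" "j * b2 \<le> (q + 1) * r2"
  shows "Delta j (b1 + b2) (r1 + r2) = Delta j b1 r1 + Delta j b2 r2"
proof -
  have "Delta j (b1 + b2) (r1 + r2)
      = real_of_int (q * (2 * (j * (b1 + b2)) - (q + 1) * (r1 + r2))) / 2"
    using assms by (intro Delta_eq_between) (auto simp: algebra_simps)
  also have "\<dots> = real_of_int (q * (2 * (j * b1) - (q + 1) * r1)) / 2
                + real_of_int (q * (2 * (j * b2) - (q + 1) * r2)) / 2"
    by (simp add: algebra_simps add_divide_distrib[symmetric])
  also have "\<dots> = Delta j b1 r1 + Delta j b2 r2"
    using assms by (simp add: Delta_eq_between)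
  finally show ?thesis .
qed

lemma no_integer_between_if_not_represented:
  fixes b1 r1 b2 r2 n b :: int
  assumes "b1 * r2 - b2 * r1 = 1"
    and "\<not> (\<exists>x y. x > 0 \<and> y > 0 \<and> n = x * r1 + y * r2)"
  shows "\<not> (b2 * n < b * r2 \<and> b * r1 < b1 * n)"
proof
  assume between: "b2 * n < b * r2 \<and> b * r1 < b1 * n"
  define x where "x = b * r2 - b2 * n"
  define y where "y = b1 * n - b * r1"
  have "x * r1 + y * r2 = n * (b1 * r2 - b2 * r1)"
    by (simp add: x_def y_def algebra_simps)
  with assms(1) have "n = x * r1 + y * r2" by simp
  moreover have "x > 0" "y > 0" using between by (auto simp: x_def y_def)
  ultimately show False using assms(2) by blast
qed

lemma common_quotient_of_adjacent_fractions:
  fixes b1 r1 b2 r2 n :: int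
  assumes "r1 > 0" "r2 > 0" "n > 0" "b1 * r2 - b2 * r1 = 1"
    and no_between: "\<And>b. \<not> (b2 * n < b * r2 \<and> b * r1 < b1 * n)"
  defines "q \<equiv> (n * b2) div r2"
  shows "q * r1 \<le> n * b1" "n * b1 \<le> (q + 1) * r1"
    and "q * r2 \<le> n * b2" "n * b2 \<le> (q + 1) * r2"
proof -
  have mod_bounds: "0 \<le> (n * b2) mod r2" "(n * b2) mod r2 < r2" using \<open>r2 > 0\<close> by simp_all
  have div_mod: "n * b2 = q * r2 + (n * b2) mod r2" by (simp add: q_def)
  show quotient_le: "q * r2 \<le> n * b2" and "n * b2 \<le> (q + 1) * r2"
    using div_mod mod_bounds by (simp_all add: algebra_simps)
  have "b2 * n < (q + 1) * r2" using div_mod mod_bounds by (simp add: algebra_simps)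
  then show "n * b1 \<le> (q + 1) * r1"
    using no_between[of "q + 1"] by (auto simp: mult.commute)
  have "r2 * (n * b1) = n + r1 * (n * b2)"
  proof -
    have "r2 * (n * b1) = n * (b1 * r2 - b2 * r1) + r1 * (n * b2)" by (simp add: algebra_simps)
    then show ?thesis using assms(4) by simp
  qed
  also have "\<dots> > r1 * (q * r2)"
    using quotient_le \<open>r1 > 0\<close> \<open>n > 0\<close> by (simp add: add_strict_increasing)
  finally have "r2 * (q * r1) < r2 * (n * b1)" by (simp add: algebra_simps)
  then show "q * r1 \<le> n * b1" using \<open>r2 > 0\<close> by simp
qed

theorem lemma2p2:
  fixes b1 r1 b2 r2 n :: int
  assumes "b1 > 0" "r1 > 0" "b2 > 0" "r2 > 0"
    and "b1 * r2 - b2 * r1 = 1"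
    and "n > 0"
    and "\<not> (\<exists>x y :: int. x > 0 \<and> y > 0 \<and> n = x * r1 + y * r2)"
  shows "\<not> (\<exists>b :: int. real_of_int b2 / real_of_int r2 < real_of_int b / real_of_int n
                      \<and> real_of_int b / real_of_int n < real_of_int b1 / real_of_int r1)
         \<and> Delta n (b1 + b2) (r1 + r2) = Delta n b1 r1 + Delta n b2 r2"
proof
  have no_between: "\<not> (b2 * n < b * r2 \<and> b * r1 < b1 * n)" for b
    using no_integer_between_if_not_represented assms(5,7) by blast
  show "\<not> (\<exists>b :: int. real_of_int b2 / real_of_int r2 < real_of_int b / real_of_int n
                      \<and> real_of_int b / real_of_int n < real_of_int b1 / real_of_int r1)"
  proof
    assume "\<exists>b :: int. real_of_int b2 / real_of_int r2 < real_of_int b / real_of_int n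
                      \<and> real_of_int b / real_of_int n < real_of_int b1 / real_of_int r1"
    then obtain b :: int
      where "real_of_int (b2 * n) < real_of_int (b * r2)" "real_of_int (b * r1) < real_of_int (b1 * n)"
      using assms by (auto simp: divide_simps mult.commute)
    with no_between[of b] show False by linarith
  qed
  show "Delta n (b1 + b2) (r1 + r2) = Delta n b1 r1 + Delta n b2 r2"
    using common_quotient_of_adjacent_fractions[OF assms(2,4,6,5) no_between]
    by (intro Delta_add_common_quotient) (use assms in auto)
qed

end
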